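(* Let $n^*_1,n^*_2\ge1$, $n^*=n^*_1+n^*_2$, and let $\psi$ be a log-convex Archimedean generator with $\phi=\psi^{-1}$. Let $X_1,\dots,X_{n^*}$ be dependent nonnegative random variables sharing an Archimedean copula with generator $\psi$, with $X_i\sim F_1(\lambda_1x)$ for $i\le n^*_1$ and $X_j\sim F_2(\lambda_2x)$ for $j>n^*_1$; let $Y_1,\dots,Y_{n^*}$ be dependent nonnegative random variables sharing an Archimedean copula with generator $\psi$, with $Y_i\sim F_1(\mu_1x)$ for $i\le n^*_1$ and $Y_j\sim F_2(\mu_2x)$ for $j>n^*_1$ ($\lambda_k,\mu_k>0$). Let $X_{n^*:n^*}(n^*_1,n^*_2)=\max_iX_i$, $Y_{n^*:n^*}(n^*_1,n^*_2)=\max_iY_i$, and write $\boldsymbol\lambda^*=(\lambda_1,\dots,\lambda_1,\lambda_2,\dots,\lambda_2)$, $\boldsymbol\mu^*=(\mu_1,\dots,\mu_1,\mu_2,\dots,\mu_2)$ (with $n^*_1$ copies of the first entry and $n^*_2$ of the second). Let either (a) $n^*_1\ge n^*_2$ and $\boldsymbol\lambda=(\lambda_1,\lambda_2),\boldsymbol\mu=(\mu_1,\mu_2)\in\mathcal E_+$, or (b) $n^*_1\le n^*_2$ and $\boldsymbol\lambda,\boldsymbol\mu\in\mathcal D_+$. Then: (i) if $\tilde r_1$ or $\tilde r_2$ is decreasing and $\tilde r_1(x)\ge\tilde r_2(x)$ for all $x>0$ in case (a) (respectively $\tilde r_1(x)\le\tilde r_2(x)$ for all $x>0$ in case (b)),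 then $\boldsymbol\lambda^*\succeq^w\boldsymbol\mu^*$ implies $Y_{n^*:n^*}(n^*_1,n^*_2)\le_{st}X_{n^*:n^*}(n^*_1,n^*_2)$; (ii) if $\tilde r_1=\tilde r_2=\tilde r$ and $\tilde r$ is decreasing, then $\boldsymbol\lambda^*\succeq^w\boldsymbol\mu^*$ implies $Y_{n^*:n^*}(n^*_1,n^*_2)\le_{st}X_{n^*:n^*}(n^*_1,n^*_2)$.
   Context: $Z\sim F(\lambda x)$ means $Z$ has distribution function $x\mapsto F(\lambda x)$. Archimedean copula: a generator is a continuous nonincreasing $\psi:[0,\infty)\to[0,1]$ with $\psi(0)=1$, $\psi(\infty)=0$, which is $m$-monotone; $\phi=\psi^{-1}$; $Z_1,\dots,Z_m$ with marginal distribution functions $G_i$ share an Archimedean copula with generator $\psi$ if $P(Z_1\le z_1,\dots,Z_m\le z_m)=\psi(\sum_i\phi(G_i(z_i)))$. $F_1,F_2$ are absolutely continuous distribution functions on $[0,\infty)$ with densities $f_k$ and reversed hazard rates $\tilde r_k=f_k/F_k$. $\mathcal E_+=\{(x_1,x_2):0<x_1\le x_2\}$, $\mathcal D_+=\{(x_1,x_2):x_1\ge x_2>0\}$. For $\boldsymbol a,\boldsymbol b\in\mathbb R^k$ with increasingly ordered coordinates: $\boldsymbol a\succeq^w\boldsymbol b$ means $\sum_{i=1}^lb_{(i)}\ge\sum_{i=1}^la_{(i)}$ for all $l$. $U\le_{st}V$ means $P(U>x)\le P(V>x)$ for all $x$. Increasing/decreasing are in the weak sense. *)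

theory Defs
  imports "HOL-Probability.Probability"
begin

definition m_monotone :: "nat \<Rightarrow> (real \<Rightarrow> real) \<Rightarrow> bool" where
  "m_monotone d psi \<longleftrightarrow>
     (if d \<le> 1 then (\<forall>x>0. 0 \<le> psi x) \<and> antimono_on {0<..} psi
      else (\<forall>k<d-2. \<forall>x>0. (deriv ^^ k) psi differentiable (at x)) \<and>
           (\<forall>k\<le>d-2. \<forall>x>0. 0 \<le> (-1::real) ^ k * (deriv ^^ k) psi x) \<and>
           antimono_on {0<..} (\<lambda>x. (-1::real) ^ (d-2) * (deriv ^^ (d-2)) psi x) \<and>
           convex_on {0<..} (\<lambda>x. (-1::real) ^ (d-2) * (deriv ^^ (d-2)) psi x))"

definition arch_generator :: "nat \<Rightarrow> (real \<Rightarrow> real) \<Rightarrow> bool" where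
  "arch_generator m psi \<longleftrightarrow>
     continuous_on {0..} psi \<and> antimono_on {0..} psi \<and> psi 0 = 1 \<and>
     (psi \<longlongrightarrow> 0) at_top \<and> (\<forall>x\<ge>0. 0 \<le> psi x \<and> psi x \<le> 1) \<and> m_monotone m psi"

definition log_convex_gen :: "(real \<Rightarrow> real) \<Rightarrow> bool" where
  "log_convex_gen psi \<longleftrightarrow> (\<forall>x\<ge>0. 0 < psi x) \<and> convex_on {0..} (\<lambda>x. ln (psi x))"

text \<open>phi = psi^{-1} (generalised inverse, for t in (0,1]).\<close>
definition gen_inv :: "(real \<Rightarrow> real) \<Rightarrow> real \<Rightarrow> real" where
  "gen_inv psi t = Inf {x. 0 \<le> x \<and> psi x = t}"

text \<open>Archimedean copula C(u_1..u_n) = psi(sum phi(u_i)); with the conventions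
  phi(0) in [0,oo], psi(oo) = 0 this is 0 as soon as some u_i = 0.\<close>
definition arch_copula :: "(real \<Rightarrow> real) \<Rightarrow> nat \<Rightarrow> (nat \<Rightarrow> real) \<Rightarrow> real" where
  "arch_copula psi n u =
     (if \<exists>i<n. u i = 0 then 0 else psi (\<Sum>i<n. gen_inv psi (u i)))"

definition shares_arch_copula ::
  "'a measure \<Rightarrow> (real \<Rightarrow> real) \<Rightarrow> nat \<Rightarrow> (nat \<Rightarrow> 'a \<Rightarrow> real) \<Rightarrow> bool" where
  "shares_arch_copula M psi n Z \<longleftrightarrow>
     (\<forall>z::nat \<Rightarrow> real.
        measure M {\<omega> \<in> space M. \<forall>i<n. Z i \<omega> \<le> z i}
        = arch_copula psi n (\<lambda>i. measure M {\<omega> \<in> space M. Z i \<omega> \<le> z i}))"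

definition ac_dist :: "(real \<Rightarrow> real) \<Rightarrow> (real \<Rightarrow> real) \<Rightarrow> bool" where
  "ac_dist F f \<longleftrightarrow> (\<forall>x. 0 \<le> f x) \<and> (\<forall>x<0. F x = 0) \<and>
     (\<forall>x\<ge>0. (f has_integral F x) {0..x}) \<and> (F \<longlongrightarrow> 1) at_top"

definition rev_hazard :: "(real \<Rightarrow> real) \<Rightarrow> (real \<Rightarrow> real) \<Rightarrow> real \<Rightarrow> real" where
  "rev_hazard F f x = f x / F x"

definition weak_supmaj :: "real list \<Rightarrow> real list \<Rightarrow> bool" where
  "weak_supmaj a b \<longleftrightarrow> length a = length b \<and>
     (\<forall>l\<le>length a. sum_list (take l (sort a)) \<le> sum_list (take l (sort b)))"

definition st_le :: "'a measure \<Rightarrow> ('a \<Rightarrow> real) \<Rightarrow> 'b measure \<Rightarrow> ('b \<Rightarrow> real) \<Rightarrow> bool" where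
  "st_le M U N V \<longleftrightarrow>
     (\<forall>x. measure M {\<omega> \<in> space M. U \<omega> > x} \<le> measure N {\<omega> \<in> space N. V \<omega> > x})"

definition max_stat :: "nat \<Rightarrow> (nat \<Rightarrow> 'a \<Rightarrow> real) \<Rightarrow> 'a \<Rightarrow> real" where
  "max_stat n Z \<omega> = Max ((\<lambda>i. Z i \<omega>) ` {..<n})"

end

theory Submission
  imports Defs
begin

text \<open>
  Both maxima have distribution function x \<mapsto> psi (n1 phi (F1 (a1 x)) + n2 phi (F2 (a2 x))),
  with (a1, a2) = (l1, l2) for X and (m1, m2) for Y, so it suffices to show that the argument of
  psi is smaller for the m's; swapping the two blocks turns case (b) into case (a).  Weak
  supermajorization gives l1 \<le> m1 and n1 l1 + n2 l2 \<le> n1 m1 + n2 m2.  If l2 \<le> m2, monotonicity of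
  phi is enough.  Otherwise l1 x \<le> m1 x \<le> m2 x < l2 x.  Whichever of the reversed hazard rates
  r2 \<le> r1 is decreasing serves as a decreasing g with r2 \<le> g \<le> r1, and Gronwall estimates for
  ln F1 and ln F2 with the constant g (m1 x) yield
  n2 (ln F2 (l2 x) - ln F2 (m2 x)) \<le> n1 (ln F1 (m1 x) - ln F1 (l1 x)).
  Since ln psi is convex, its chord slopes increase, and this turns the bound into the required
  inequality for phi.  The same squeezing shows that ln F1 - ln F2 increases on (0, \<infinity>); as it
  tends to 0, F1 \<le> F2, which puts the four probabilities in the order the chord argument needs.
\<close>

section \<open>Absolutely continuous distribution functions\<close>

lemma ac_dist_eq_0:
  assumes "ac_dist F f" and "x \<le> 0"
  shows "F x = 0"
proof (cases "x < 0")
  case True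
  then show ?thesis using assms(1) unfolding ac_dist_def by auto
next
  case False
  then have "(f has_integral F x) {x..x}" using assms unfolding ac_dist_def by auto
  then show ?thesis by (metis atLeastAtMost_singleton has_integral_refl(2) has_integral_unique)
qed

lemma ac_dist_has_integral_diff:
  assumes F: "ac_dist F f" and "0 \<le> a" "a \<le> b"
  shows "(f has_integral F b - F a) {a..b}"
proof -
  have ia: "(f has_integral F a) {0..a}" and ib: "(f has_integral F b) {0..b}"
    using F assms unfolding ac_dist_def by auto
  have "f integrable_on {a..b}"
    using integrable_subinterval_real[OF has_integral_integrable[OF ib]] assms by auto
  then obtain i where i: "(f has_integral i) {a..b}" by blast
  have "(f has_integral F a + i) {0..b}" by (rule has_integral_combine[OF assms(2,3) ia i])
  then have "F b = F a + i" using ib has_integral_unique by blast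
  then show ?thesis using i by simp
qed

lemma ac_dist_mono:
  assumes F: "ac_dist F f" and "x \<le> y"
  shows "F x \<le> F y"
proof -
  have mono_nonneg: "F u \<le> F v" if "0 \<le> u" "u \<le> v" for u v
    using has_integral_nonneg[OF ac_dist_has_integral_diff[OF F that]] F
    unfolding ac_dist_def by auto
  show ?thesis
  proof (cases "x \<le> 0")
    case True
    have "0 \<le> F y"
      using ac_dist_eq_0[OF F, of y] ac_dist_eq_0[OF F, of 0] mono_nonneg[of 0 y]
      by (cases "y \<le> 0") auto
    then show ?thesis using ac_dist_eq_0[OF F True] by simp
  qed (use mono_nonneg assms in auto)
qed

lemma ac_dist_nonneg: "ac_dist F f \<Longrightarrow> 0 \<le> F x"
  using ac_dist_mono[of F f "min x 0" x] ac_dist_eq_0[of F f "min x 0"] by auto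

lemma ac_dist_le_1:
  assumes F: "ac_dist F f"
  shows "F x \<le> 1"
proof (rule tendsto_lowerbound)
  show "(F \<longlongrightarrow> 1) at_top" using F unfolding ac_dist_def by auto
  show "\<forall>\<^sub>F y in at_top. F x \<le> F y"
    using eventually_ge_at_top[of x] by eventually_elim (use ac_dist_mono[OF F] in auto)
qed simp

lemma ac_dist_isCont:
  assumes F: "ac_dist F f" and "0 < x"
  shows "isCont F x"
proof -
  have "(f has_integral F (x + 1)) {0..x+1}" using F assms unfolding ac_dist_def by simp
  then have "continuous_on {0..x+1} (\<lambda>t. integral {0..t} f)"
    by (intro indefinite_integral_continuous_1 has_integral_integrable)
  then have "continuous_on {0<..<x+1} (\<lambda>t. integral {0..t} f)"
    by (rule continuous_on_subset) auto
  then have "continuous_on {0<..<x+1} F"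
    by (rule continuous_on_eq) (use F in \<open>auto simp: ac_dist_def integral_unique\<close>)
  then show ?thesis using assms by (simp add: continuous_on_eq_continuous_at)
qed

lemma rev_hazard_nonneg:
  assumes "ac_dist F f"
  shows "0 \<le> rev_hazard F f x"
  using assms ac_dist_nonneg[OF assms, of x] unfolding rev_hazard_def ac_dist_def by simp

section \<open>Gronwall estimates\<close>

lemma mult_power_le_of_steps:
  fixes G :: "nat \<Rightarrow> real"
  assumes "0 \<le> q" and "\<And>k. k < n \<Longrightarrow> G k * q \<le> G (Suc k)"
  shows "G 0 * q ^ n \<le> G n"
  using assms(2)
proof (induction n)
  case (Suc n)
  have "G 0 * q ^ Suc n = G 0 * q ^ n * q" by simp
  also have "\<dots> \<le> G n * q" using Suc assms(1) by (intro mult_right_mono) auto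
  also have "\<dots> \<le> G (Suc n)" using Suc.prems by simp
  finally show ?case .
qed simp

lemma uniform_grid_step:
  fixes a b :: real
  assumes "a \<le> b" and "k < n"
  defines "h \<equiv> (b - a) / real n"
  shows "0 \<le> h" and "a \<le> a + real k * h" and "a + real (Suc k) * h = a + real k * h + h"
    and "a + real (Suc k) * h \<le> b"
proof -
  show h: "0 \<le> h" using assms by (simp add: h_def)
  then show "a \<le> a + real k * h" by simp
  show "a + real (Suc k) * h = a + real k * h + h" by (simp add: algebra_simps)
  have "real (Suc k) * h \<le> real n * h" using h assms(2) by (intro mult_right_mono) auto
  also have "\<dots> = b - a" using assms(2) by (simp add: h_def)
  finally show "a + real (Suc k) * h \<le> b" by simp
qed

lemma ac_dist_step_lower:
  assumes F: "ac_dist F f" and "0 \<le> s" "s \<le> t" "0 \<le> c"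
    and le: "\<And>y. y \<in> {s..t} \<Longrightarrow> c * F y \<le> f y"
  shows "F s * (1 + c * (t - s)) \<le> F t"
proof -
  have "((\<lambda>_. c * F s) has_integral (t - s) * (c * F s)) {s..t}"
    using has_integral_const_real[of "c * F s" s t] assms(3) by simp
  moreover have "c * F s \<le> f y" if "y \<in> {s..t}" for y
    using mult_left_mono[OF ac_dist_mono[OF F, of s y] \<open>0 \<le> c\<close>] le[OF that] that by auto
  ultimately have "(t - s) * (c * F s) \<le> F t - F s"
    using has_integral_le ac_dist_has_integral_diff[OF F assms(2,3)] by blast
  then show ?thesis by (simp add: algebra_simps)
qed

lemma ac_dist_step_upper:
  assumes F: "ac_dist F f" and "0 \<le> s" "s \<le> t" "0 \<le> c"
    and le: "\<And>y. y \<in> {s..t} \<Longrightarrow> f y \<le> c * F y"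
  shows "F t * (1 - c * (t - s)) \<le> F s"
proof -
  have "((\<lambda>_. c * F t) has_integral (t - s) * (c * F t)) {s..t}"
    using has_integral_const_real[of "c * F t" s t] assms(3) by simp
  moreover have "f y \<le> c * F t" if "y \<in> {s..t}" for y
    using mult_left_mono[OF ac_dist_mono[OF F, of y t] \<open>0 \<le> c\<close>] le[OF that] that by auto
  ultimately have "F t - F s \<le> (t - s) * (c * F t)"
    using has_integral_le ac_dist_has_integral_diff[OF F assms(2,3)] by blast
  then show ?thesis by (simp add: algebra_simps)
qed

text \<open>F need not be differentiable, so the exponential bounds come from a uniform grid and
  (1 + t / n) ^ n \<longlonglongrightarrow> exp t.\<close>

lemma ac_dist_exp_lower:
  assumes F: "ac_dist F f" and "0 \<le> a" "a \<le> b" "0 \<le> c"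
    and le: "\<And>y. y \<in> {a..b} \<Longrightarrow> c * F y \<le> f y"
  shows "F a * exp (c * (b - a)) \<le> F b"
proof (rule LIMSEQ_le_const2)
  show "(\<lambda>n. F a * (1 + c * (b - a) / real n) ^ n) \<longlonglongrightarrow> F a * exp (c * (b - a))"
    by (intro tendsto_mult tendsto_const tendsto_exp_limit_sequentially)
  show "\<exists>N. \<forall>n\<ge>N. F a * (1 + c * (b - a) / real n) ^ n \<le> F b"
  proof (intro exI allI impI)
    fix n :: nat assume n: "1 \<le> n"
    define h where "h = (b - a) / real n"
    note grid = uniform_grid_step[OF \<open>a \<le> b\<close>, of _ n, folded h_def]
    have "F (a + real 0 * h) * (1 + c * h) ^ n \<le> F (a + real n * h)"
    proof (rule mult_power_le_of_steps)
      fix k assume k: "k < n"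
      have le_k: "c * F y \<le> f y" if "y \<in> {a + real k * h..a + real (Suc k) * h}" for y
        using le[of y] grid(2,4)[OF k] that unfolding atLeastAtMost_iff by linarith
      have "F (a + real k * h) * (1 + c * (a + real (Suc k) * h - (a + real k * h)))
          \<le> F (a + real (Suc k) * h)"
        by (rule ac_dist_step_lower[OF F _ _ \<open>0 \<le> c\<close> le_k]) (use grid[OF k] assms in auto)
      then show "F (a + real k * h) * (1 + c * h) \<le> F (a + real (Suc k) * h)"
        using grid(3)[OF k] by simp
    qed (use grid(1)[of 0] n \<open>0 \<le> c\<close> in simp)
    then show "F a * (1 + c * (b - a) / real n) ^ n \<le> F b" using n by (simp add: h_def)
  qed
qed

lemma ac_dist_exp_upper:
  assumes F: "ac_dist F f" and "0 \<le> a" "a \<le> b" "0 \<le> c"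
    and le: "\<And>y. y \<in> {a..b} \<Longrightarrow> f y \<le> c * F y"
  shows "F b \<le> F a * exp (c * (b - a))"
proof -
  have "F b * exp (- (c * (b - a))) \<le> F a"
  proof (rule LIMSEQ_le_const2)
    show "(\<lambda>n. F b * (1 + - (c * (b - a)) / real n) ^ n) \<longlonglongrightarrow> F b * exp (- (c * (b - a)))"
      by (intro tendsto_mult tendsto_const tendsto_exp_limit_sequentially)
    obtain N :: nat where N: "c * (b - a) \<le> real N" using real_arch_simple by blast
    show "\<exists>N. \<forall>n\<ge>N. F b * (1 + - (c * (b - a)) / real n) ^ n \<le> F a"
    proof (intro exI allI impI)
      fix n :: nat assume n: "max 1 N \<le> n"
      define h where "h = (b - a) / real n"
      note grid = uniform_grid_step[OF \<open>a \<le> b\<close>, of _ n, folded h_def]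
      have "F (a + real (n - 0) * h) * (1 - c * h) ^ n \<le> F (a + real (n - n) * h)"
      proof (rule mult_power_le_of_steps)
        show "0 \<le> 1 - c * h" using N n by (simp add: h_def field_simps)
        fix k assume k: "k < n"
        define j where "j = n - Suc k"
        have j: "j < n" "n - k = Suc j" "n - Suc k = j" using k by (auto simp: j_def)
        show "F (a + real (n - k) * h) * (1 - c * h) \<le> F (a + real (n - Suc k) * h)"
        proof -
          have le_j: "f y \<le> c * F y" if "y \<in> {a + real j * h..a + real (Suc j) * h}" for y
            using le[of y] grid(2,4)[OF j(1)] that unfolding atLeastAtMost_iff by linarith
          have "F (a + real (Suc j) * h) * (1 - c * (a + real (Suc j) * h - (a + real j * h)))
              \<le> F (a + real j * h)"
            by (rule ac_dist_step_upper[OF F _ _ \<open>0 \<le> c\<close> le_j]) (use grid[OF j(1)] assms in auto)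
          then show ?thesis unfolding j(2,3) using grid(3)[OF j(1)] by simp
        qed
      qed
      then show "F b * (1 + - (c * (b - a)) / real n) ^ n \<le> F a" using n by (simp add: h_def)
    qed
  qed
  from mult_right_mono[OF this, of "exp (c * (b - a))"] show ?thesis
    by (simp add: mult.assoc flip: exp_add)
qed

lemma ln_ac_dist_diff_ge:
  assumes F: "ac_dist F f" and "0 \<le> u" "u \<le> v" "0 < F u" "0 \<le> c"
    and le: "\<And>y. y \<in> {u..v} \<Longrightarrow> c \<le> rev_hazard F f y"
  shows "c * (v - u) \<le> ln (F v) - ln (F u)"
proof -
  have pos: "0 < F y" if "u \<le> y" for y using ac_dist_mono[OF F that] \<open>0 < F u\<close> by linarith
  have "F u * exp (c * (v - u)) \<le> F v"
  proof (rule ac_dist_exp_lower[OF F assms(2,3,5)])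
    fix y assume y: "y \<in> {u..v}"
    have "0 < F y" using pos y by simp
    then have "c * F y \<le> rev_hazard F f y * F y" using le[OF y] by (intro mult_right_mono) auto
    then show "c * F y \<le> f y" using \<open>0 < F y\<close> by (simp add: rev_hazard_def)
  qed
  then have "ln (F u * exp (c * (v - u))) \<le> ln (F v)" using pos assms by simp
  then show ?thesis using \<open>0 < F u\<close> by (simp add: ln_mult)
qed

lemma ln_ac_dist_diff_le:
  assumes F: "ac_dist F f" and "0 \<le> u" "u \<le> v" "0 < F u" "0 \<le> c"
    and le: "\<And>y. y \<in> {u..v} \<Longrightarrow> rev_hazard F f y \<le> c"
  shows "ln (F v) - ln (F u) \<le> c * (v - u)"
proof -
  have pos: "0 < F y" if "u \<le> y" for y using ac_dist_mono[OF F that] \<open>0 < F u\<close> by linarith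
  have "F v \<le> F u * exp (c * (v - u))"
  proof (rule ac_dist_exp_upper[OF F assms(2,3,5)])
    fix y assume y: "y \<in> {u..v}"
    have "0 < F y" using pos y by simp
    then have "rev_hazard F f y * F y \<le> c * F y" using le[OF y] by (intro mult_right_mono) auto
    then show "f y \<le> c * F y" using \<open>0 < F y\<close> by (simp add: rev_hazard_def)
  qed
  then have "ln (F v) \<le> ln (F u * exp (c * (v - u)))" using pos assms by simp
  then show ?thesis using \<open>0 < F u\<close> by (simp add: ln_mult)
qed

section \<open>Comparison through reversed hazard rates\<close>

lemma obtain_antimono_between:
  fixes r1 r2 :: "real \<Rightarrow> real"
  assumes "\<forall>x>0. r2 x \<le> r1 x" and "antimono_on {0<..} r1 \<or> antimono_on {0<..} r2"
  obtains g where "antimono_on {0<..} g" and "\<And>x. 0 < x \<Longrightarrow> r2 x \<le> g x \<and> g x \<le> r1 x"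
proof (cases "antimono_on {0<..} r1")
  case True
  then show ?thesis using that assms by auto
next
  case False
  then show ?thesis using that assms by auto
qed

lemma le_of_increments_ge:
  fixes \<Phi> g :: "real \<Rightarrow> real"
  assumes "a \<le> b" and "0 \<le> g b"
    and incr: "\<And>u v. a \<le> u \<Longrightarrow> u \<le> v \<Longrightarrow> v \<le> b \<Longrightarrow> (v - u) * (g v - g u) \<le> \<Phi> v - \<Phi> u"
  shows "\<Phi> a \<le> \<Phi> b"
proof (rule LIMSEQ_le_const2)
  show "(\<lambda>n. \<Phi> a - (b - a) * g a / real n) \<longlonglongrightarrow> \<Phi> a"
    using tendsto_diff[OF tendsto_const lim_const_over_n[of "(b - a) * g a"]] by simp
  show "\<exists>N. \<forall>n\<ge>N. \<Phi> a - (b - a) * g a / real n \<le> \<Phi> b"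
  proof (intro exI allI impI)
    fix n :: nat assume n: "1 \<le> n"
    define h where "h = (b - a) / real n"
    define p where "p k = a + real k * h" for k
    note grid = uniform_grid_step[OF \<open>a \<le> b\<close>, of _ n, folded h_def]
    \<comment> \<open>telescoping over the grid: \<open>\<Phi> b - \<Phi> a \<ge> h (g b - g a) \<ge> - h g a\<close>\<close>
    have ends: "p 0 = a" "p n = b" using n by (simp_all add: p_def h_def)
    have "h * (g b - g a) = (\<Sum>k<n. h * (g (p (Suc k)) - g (p k)))"
      using sum_lessThan_telescope[of "\<lambda>k. g (p k)" n] by (simp add: ends flip: sum_distrib_left)
    also have "\<dots> \<le> (\<Sum>k<n. \<Phi> (p (Suc k)) - \<Phi> (p k))"
    proof (rule sum_mono)
      fix k assume "k \<in> {..<n}"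
      then have k: "k < n" by simp
      have "h = p (Suc k) - p k" using grid(3)[OF k] by (simp add: p_def)
      then show "h * (g (p (Suc k)) - g (p k)) \<le> \<Phi> (p (Suc k)) - \<Phi> (p k)"
        using incr[of "p k" "p (Suc k)"] grid[OF k] by (simp add: p_def)
    qed
    also have "\<dots> = \<Phi> b - \<Phi> a" using sum_lessThan_telescope[of "\<lambda>k. \<Phi> (p k)" n] by (simp add: ends)
    finally have "h * (g b - g a) \<le> \<Phi> b - \<Phi> a" .
    moreover have "0 \<le> h * g b" using grid(1)[of 0] n assms(2) by simp
    moreover have "h * g a = (b - a) * g a / real n" by (simp add: h_def)
    ultimately show "\<Phi> a - (b - a) * g a / real n \<le> \<Phi> b" by (simp add: algebra_simps)
  qed
qed

lemma cdf_le_of_rev_hazard_le_pos: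
  assumes F1: "ac_dist F1 f1" and F2: "ac_dist F2 f2"
    and le: "\<forall>x>0. rev_hazard F2 f2 x \<le> rev_hazard F1 f1 x"
    and am: "antimono_on {0<..} (rev_hazard F1 f1) \<or> antimono_on {0<..} (rev_hazard F2 f2)"
    and t: "0 < t" "0 < F1 t" "0 < F2 t"
  shows "F1 t \<le> F2 t"
proof -
  obtain g where g: "antimono_on {0<..} g"
    and between: "\<And>x. 0 < x \<Longrightarrow> rev_hazard F2 f2 x \<le> g x \<and> g x \<le> rev_hazard F1 f1 x"
    using obtain_antimono_between[OF le am] by blast
  have g_nonneg: "0 \<le> g x" if "0 < x" for x
    using between[OF that] rev_hazard_nonneg[OF F2, of x] by linarith
  have g_anti: "g v \<le> g u" if "0 < u" "u \<le> v" for u v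
    using monotone_onD[OF g] that by auto
  have pos: "0 < F1 s" "0 < F2 s" if "t \<le> s" for s
    using ac_dist_mono[OF F1 that] ac_dist_mono[OF F2 that] t by linarith+
  define \<Phi> where "\<Phi> s = ln (F1 s) - ln (F2 s)" for s
  have \<Phi>_mono: "\<Phi> t \<le> \<Phi> T" if "t \<le> T" for T
  proof (rule le_of_increments_ge[OF that])
    show "0 \<le> g T" using g_nonneg t that by simp
    fix u v assume uv: "t \<le> u" "u \<le> v" "v \<le> T"
    have "g v * (v - u) \<le> ln (F1 v) - ln (F1 u)"
    proof (rule ln_ac_dist_diff_ge[OF F1])
      fix y assume "y \<in> {u..v}"
      then show "g v \<le> rev_hazard F1 f1 y"
        using g_anti[of y v] between[of y] uv t by force
    qed (use uv t pos g_nonneg in auto)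
    moreover have "ln (F2 v) - ln (F2 u) \<le> g u * (v - u)"
    proof (rule ln_ac_dist_diff_le[OF F2])
      fix y assume "y \<in> {u..v}"
      then show "rev_hazard F2 f2 y \<le> g u"
        using g_anti[of u y] between[of y] uv t by force
    qed (use uv t pos g_nonneg in auto)
    ultimately show "(v - u) * (g v - g u) \<le> \<Phi> v - \<Phi> u"
      unfolding \<Phi>_def by (simp add: algebra_simps)
  qed
  have "(\<Phi> \<longlongrightarrow> ln 1 - ln 1) at_top"
    unfolding \<Phi>_def by (intro tendsto_diff tendsto_ln) (use F1 F2 in \<open>auto simp: ac_dist_def\<close>)
  then have "\<Phi> t \<le> 0"
    by (intro tendsto_lowerbound[of \<Phi> 0 at_top])
      (auto intro!: eventually_mono[OF eventually_ge_at_top[of t]] \<Phi>_mono)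
  then show ?thesis using pos[of t] unfolding \<Phi>_def by simp
qed

lemma cdf_pos_of_rev_hazard_le:
  assumes F1: "ac_dist F1 f1" and F2: "ac_dist F2 f2"
    and le: "\<forall>x>0. rev_hazard F2 f2 x \<le> rev_hazard F1 f1 x"
    and am: "antimono_on {0<..} (rev_hazard F1 f1) \<or> antimono_on {0<..} (rev_hazard F2 f2)"
    and t: "0 < t" "0 < F1 t"
  shows "0 < F2 t"
proof (rule ccontr)
  assume "\<not> 0 < F2 t"
  then have F2t: "F2 t = 0" using ac_dist_nonneg[OF F2, of t] by linarith
  have "(F2 \<longlongrightarrow> 1) at_top" using F2 unfolding ac_dist_def by simp
  then have "\<forall>\<^sub>F s in at_top. 0 < F2 s \<and> t \<le> s"
    using order_tendstoD(1)[of F2 1 at_top 0] eventually_ge_at_top[of t]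
    by (auto elim: eventually_conj)
  then obtain r where r: "t \<le> r" "0 < F2 r" by (auto dest: eventually_happens)
  \<comment> \<open>right of the last zero t0 of F2 we have F2 \<ge> F1 \<ge> F1 t, so F2 t0 \<ge> F1 t by continuity\<close>
  define S where "S = {s \<in> {t..r}. F2 s = 0}"
  have "continuous_on {t..r} F2"
    using ac_dist_isCont[OF F2] t by (intro continuous_at_imp_continuous_on) auto
  then have "closed S" unfolding S_def by (rule continuous_closed_preimage_constant) simp
  moreover have "S \<noteq> {}" "bdd_above S" using F2t r unfolding S_def by (auto intro: bdd_aboveI)
  ultimately have "Sup S \<in> S" by (intro closed_contains_Sup)
  define t0 where "t0 = Sup S"
  have t0: "t \<le> t0" "F2 t0 = 0" using \<open>Sup S \<in> S\<close> unfolding t0_def S_def by auto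
  have F2_pos: "0 < F2 s" if "t0 < s" for s
  proof (cases "s \<le> r")
    case True
    have "s \<notin> S" using cSup_upper[OF _ \<open>bdd_above S\<close>, of s] that unfolding t0_def by auto
    then show ?thesis using True that t0 ac_dist_nonneg[OF F2, of s] unfolding S_def by force
  qed (use ac_dist_mono[OF F2, of r s] r in auto)
  have "F1 t \<le> F2 s" if "t0 < s" for s
  proof -
    have "F1 t \<le> F1 s" using ac_dist_mono[OF F1] t0 that by simp
    also have "\<dots> \<le> F2 s"
      using cdf_le_of_rev_hazard_le_pos[OF F1 F2 le am] F2_pos[OF that] t t0 that calculation
      by simp
    finally show ?thesis .
  qed
  moreover have "(F2 \<longlongrightarrow> F2 t0) (at_right t0)"
    using ac_dist_isCont[OF F2, of t0] t t0 by (simp add: isCont_def filterlim_at_split)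
  ultimately have "F1 t \<le> F2 t0"
    by (intro tendsto_lowerbound[of F2 _ "at_right t0"]) (auto intro: eventually_mono[OF eventually_at_right_less])
  then show False using t t0 by simp
qed

lemma cdf_le_of_rev_hazard_le:
  assumes F1: "ac_dist F1 f1" and F2: "ac_dist F2 f2"
    and le: "\<forall>x>0. rev_hazard F2 f2 x \<le> rev_hazard F1 f1 x"
    and am: "antimono_on {0<..} (rev_hazard F1 f1) \<or> antimono_on {0<..} (rev_hazard F2 f2)"
    and "0 < t"
  shows "F1 t \<le> F2 t"
proof (cases "F1 t = 0")
  case False
  then have "0 < F1 t" using ac_dist_nonneg[OF F1, of t] by linarith
  then show ?thesis
    using cdf_le_of_rev_hazard_le_pos[OF F1 F2 le am \<open>0 < t\<close>]
      cdf_pos_of_rev_hazard_le[OF F1 F2 le am \<open>0 < t\<close>] by blast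
qed (use ac_dist_nonneg[OF F2] in simp)

section \<open>Log-convex generators\<close>

lemma arch_generator_gen_inv:
  assumes gen: "arch_generator m psi" and u: "0 < u" "u \<le> 1"
  shows "0 \<le> gen_inv psi u" and "psi (gen_inv psi u) = u"
proof -
  have cont: "continuous_on {0..} psi" and "psi 0 = 1" and "(psi \<longlongrightarrow> 0) at_top"
    using gen unfolding arch_generator_def by auto
  then have "\<forall>\<^sub>F x in at_top. psi x < u \<and> 0 \<le> x"
    using order_tendstoD(2)[of psi 0 at_top u] u eventually_ge_at_top[of 0]
    by (auto elim: eventually_conj)
  then obtain N where N: "psi N < u" "0 \<le> N" by (auto dest: eventually_happens)
  have "continuous_on {0..N} psi" using continuous_on_subset[OF cont] by auto
  then have "\<exists>x. 0 \<le> x \<and> x \<le> N \<and> psi x = u"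
    by (intro IVT2') (use N u \<open>psi 0 = 1\<close> in auto)
  then have ne: "{x. 0 \<le> x \<and> psi x = u} \<noteq> {}" by blast
  have "closed {x \<in> {0..}. psi x = u}"
    by (rule continuous_closed_preimage_constant[OF cont]) simp
  moreover have "{x \<in> {0..}. psi x = u} = {x. 0 \<le> x \<and> psi x = u}" by auto
  ultimately have "Inf {x. 0 \<le> x \<and> psi x = u} \<in> {x. 0 \<le> x \<and> psi x = u}"
    using ne by (intro closed_contains_Inf) (auto intro: bdd_belowI[of _ 0])
  then show "0 \<le> gen_inv psi u" "psi (gen_inv psi u) = u" unfolding gen_inv_def by auto
qed

lemma gen_inv_antimono:
  assumes gen: "arch_generator m psi" and "0 < u" "u \<le> w" "w \<le> 1"
  shows "gen_inv psi w \<le> gen_inv psi u"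
proof (rule ccontr)
  assume less: "\<not> gen_inv psi w \<le> gen_inv psi u"
  have "antimono_on {0..} psi" using gen unfolding arch_generator_def by auto
  then have "psi (gen_inv psi w) \<le> psi (gen_inv psi u)"
    using monotone_onD less arch_generator_gen_inv(1)[OF gen] assms by fastforce
  then have "u = w" using arch_generator_gen_inv(2)[OF gen] assms by auto
  then show False using less by simp
qed

lemma convex_on_slope_cross_le:
  fixes h :: "real \<Rightarrow> real"
  assumes "convex_on I h" "x1 \<in> I" "y2 \<in> I" and "x1 < y1" "y1 \<le> x2" "x2 \<le> y2"
  shows "(h y1 - h x1) * (y2 - x2) \<le> (h y2 - h x2) * (y1 - x1)"
proof (cases "x2 = y2")
  case False
  then have "x2 < y2" using assms by simp
  have "(h x1 - h y1) / (x1 - y1) \<le> (h x1 - h y2) / (x1 - y2)"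
    by (rule convex_on_slope_le(1)[OF assms(1-3)]) (use assms \<open>x2 < y2\<close> in auto)
  also have "\<dots> \<le> (h x2 - h y2) / (x2 - y2)"
    by (rule convex_on_slope_le(2)[OF assms(1-3)]) (use assms \<open>x2 < y2\<close> in auto)
  finally show ?thesis using assms \<open>x2 < y2\<close> by (simp add: field_simps)
qed simp

lemma gen_inv_weighted_le:
  fixes w1 w2 :: real
  assumes gen: "arch_generator m psi" and lc: "log_convex_gen psi" and "0 \<le> w1"
    and p: "0 < p1" "p1 \<le> q1" "q1 \<le> p2" "p2 \<le> q2" "q2 \<le> 1"
    and ln_le: "w2 * (ln q2 - ln p2) \<le> w1 * (ln q1 - ln p1)"
  shows "w1 * gen_inv psi q1 + w2 * gen_inv psi p2 \<le> w1 * gen_inv psi p1 + w2 * gen_inv psi q2"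
proof -
  define A1 B1 A2 B2 where "A1 = gen_inv psi p1" and "B1 = gen_inv psi q1"
    and "A2 = gen_inv psi p2" and "B2 = gen_inv psi q2"
  have order: "0 \<le> B2" "B2 \<le> A2" "A2 \<le> B1" "B1 \<le> A1"
    unfolding A1_def B1_def A2_def B2_def using p
    by (auto intro!: gen_inv_antimono[OF gen] arch_generator_gen_inv(1)[OF gen])
  have psi_A_B: "psi A1 = p1" "psi B1 = q1" "psi A2 = p2" "psi B2 = q2"
    unfolding A1_def B1_def A2_def B2_def using arch_generator_gen_inv(2)[OF gen] p by auto
  have "w2 * (A2 - B2) \<le> w1 * (A1 - B1)"
  proof (cases "B2 = A2")
    case True
    then show ?thesis using order \<open>0 \<le> w1\<close> by simp
  next
    case False
    then have "B2 < A2" using order by simp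
    have "p2 \<noteq> q2" using False unfolding A2_def B2_def by auto
    then have "p2 < q2" using p by simp
    define D where "D = ln q2 - ln p2"
    have "0 < D" using \<open>p2 < q2\<close> p by (simp add: D_def)
    have "convex_on {0..} (\<lambda>x. ln (psi x))" using lc unfolding log_convex_gen_def by simp
    from convex_on_slope_cross_le[OF this, of B2 A1 A2 B1]
    have chord: "(ln q1 - ln p1) * (A2 - B2) \<le> D * (A1 - B1)"
      using order \<open>B2 < A2\<close> psi_A_B by (simp add: D_def algebra_simps)
    have "D * (w2 * (A2 - B2)) \<le> w1 * (ln q1 - ln p1) * (A2 - B2)"
      using mult_right_mono[OF ln_le, of "A2 - B2"] order by (simp add: D_def algebra_simps)
    also have "\<dots> \<le> D * (w1 * (A1 - B1))"
      using mult_left_mono[OF chord \<open>0 \<le> w1\<close>] by (simp add: algebra_simps)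
    finally show ?thesis using \<open>0 < D\<close> by simp
  qed
  then show ?thesis unfolding A1_def B1_def A2_def B2_def by (simp add: algebra_simps)
qed

lemma gen_inv_weighted_sum_le:
  fixes w1 w2 :: real
  assumes F1: "ac_dist F1 f1" and F2: "ac_dist F2 f2"
    and gen: "arch_generator m psi" and lc: "log_convex_gen psi"
    and le: "\<forall>x>0. rev_hazard F2 f2 x \<le> rev_hazard F1 f1 x"
    and am: "antimono_on {0<..} (rev_hazard F1 f1) \<or> antimono_on {0<..} (rev_hazard F2 f2)"
    and w: "0 \<le> w1" "0 \<le> w2"
    and scales: "0 < l1" "l1 \<le> m1" "m1 \<le> m2"
    and sum_le: "w1 * l1 + w2 * l2 \<le> w1 * m1 + w2 * m2"
    and x: "0 < x" and pos: "0 < F1 (l1 * x)" "0 < F2 (l2 * x)"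
  shows "0 < F1 (m1 * x) \<and> 0 < F2 (m2 * x) \<and>
    w1 * gen_inv psi (F1 (m1 * x)) + w2 * gen_inv psi (F2 (m2 * x))
    \<le> w1 * gen_inv psi (F1 (l1 * x)) + w2 * gen_inv psi (F2 (l2 * x))"
proof -
  have F1_le: "F1 (l1 * x) \<le> F1 (m1 * x)" using ac_dist_mono[OF F1] scales x by simp
  have F1_m1: "0 < F1 (m1 * x)" using F1_le pos by simp
  have le_1: "F1 y \<le> 1" "F2 y \<le> 1" for y using ac_dist_le_1 F1 F2 by auto
  show ?thesis
  proof (cases "l2 \<le> m2")
    case True
    have F2_le: "F2 (l2 * x) \<le> F2 (m2 * x)" using ac_dist_mono[OF F2] True x by simp
    have "gen_inv psi (F1 (m1 * x)) \<le> gen_inv psi (F1 (l1 * x))"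
      "gen_inv psi (F2 (m2 * x)) \<le> gen_inv psi (F2 (l2 * x))"
      using gen_inv_antimono[OF gen] pos F1_le F2_le le_1 by auto
    then show ?thesis using F1_m1 F2_le pos w by (auto intro!: add_mono mult_left_mono)
  next
    case False
    have xs: "0 < l1 * x" "l1 * x \<le> m1 * x" "m1 * x \<le> m2 * x" "m2 * x \<le> l2 * x"
      using False scales x by auto
    have F1_m2: "0 < F1 (m2 * x)" using ac_dist_mono[OF F1 xs(3)] F1_m1 by simp
    have F2_m2: "0 < F2 (m2 * x)"
      by (rule cdf_pos_of_rev_hazard_le[OF F1 F2 le am _ F1_m2]) (use xs in simp)
    have F1_F2: "F1 (m2 * x) \<le> F2 (m2 * x)"
      by (rule cdf_le_of_rev_hazard_le[OF F1 F2 le am]) (use xs in simp)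
    obtain g where g: "antimono_on {0<..} g"
      and between: "\<And>x. 0 < x \<Longrightarrow> rev_hazard F2 f2 x \<le> g x \<and> g x \<le> rev_hazard F1 f1 x"
      using obtain_antimono_between[OF le am] by blast
    have g_anti: "g v \<le> g u" if "0 < u" "u \<le> v" for u v
      using monotone_onD[OF g] that by auto
    \<comment> \<open>c bounds r1 from below on [l1 x, m1 x] and r2 from above on [m2 x, l2 x]\<close>
    define c where "c = g (m1 * x)"
    have "0 \<le> c"
      using between[of "m1 * x"] rev_hazard_nonneg[OF F2, of "m1 * x"] xs unfolding c_def by force
    have ln_F1: "c * (m1 * x - l1 * x) \<le> ln (F1 (m1 * x)) - ln (F1 (l1 * x))"
    proof (rule ln_ac_dist_diff_ge[OF F1])
      fix y assume "y \<in> {l1 * x..m1 * x}"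
      then show "c \<le> rev_hazard F1 f1 y"
        using g_anti[of y "m1 * x"] between[of y] xs unfolding c_def by force
    qed (use xs pos \<open>0 \<le> c\<close> in auto)
    have ln_F2: "ln (F2 (l2 * x)) - ln (F2 (m2 * x)) \<le> c * (l2 * x - m2 * x)"
    proof (rule ln_ac_dist_diff_le[OF F2])
      fix y assume "y \<in> {m2 * x..l2 * x}"
      then show "rev_hazard F2 f2 y \<le> c"
        using g_anti[of "m1 * x" y] between[of y] xs unfolding c_def by force
    qed (use xs F2_m2 \<open>0 \<le> c\<close> in auto)
    have "w2 * (ln (F2 (l2 * x)) - ln (F2 (m2 * x))) \<le> (w2 * (l2 - m2)) * (c * x)"
      using mult_left_mono[OF ln_F2 w(2)] by (simp add: algebra_simps)
    also have "\<dots> \<le> (w1 * (m1 - l1)) * (c * x)"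
      using sum_le \<open>0 \<le> c\<close> x by (intro mult_right_mono) (auto simp: algebra_simps)
    also have "\<dots> \<le> w1 * (ln (F1 (m1 * x)) - ln (F1 (l1 * x)))"
      using mult_left_mono[OF ln_F1 w(1)] by (simp add: algebra_simps)
    finally have "w1 * gen_inv psi (F1 (m1 * x)) + w2 * gen_inv psi (F2 (m2 * x))
        \<le> w1 * gen_inv psi (F1 (l1 * x)) + w2 * gen_inv psi (F2 (l2 * x))"
      using ac_dist_mono[OF F1 xs(3)] ac_dist_mono[OF F2 xs(4)] F1_F2
      by (intro gen_inv_weighted_le[OF gen lc w(1) pos(1) F1_le _ _ le_1(2)]) auto
    then show ?thesis using F1_m1 F2_m2 by simp
  qed
qed

lemma weak_supmaj_two_blocks:
  assumes ws: "weak_supmaj (replicate p a1 @ replicate q a2) (replicate p b1 @ replicate q b2)"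
    and "a1 \<le> a2" "b1 \<le> b2"
  shows "real p * a1 \<le> real p * b1" and "real p * a1 + real q * a2 \<le> real p * b1 + real q * b2"
proof -
  have "sort (replicate p a1 @ replicate q a2) = replicate p a1 @ replicate q a2"
    "sort (replicate p b1 @ replicate q b2) = replicate p b1 @ replicate q b2"
    using assms(2,3) by (auto simp: sorted_append intro!: sorted_sort_id)
  then have W: "sum_list (take l (replicate p a1 @ replicate q a2))
      \<le> sum_list (take l (replicate p b1 @ replicate q b2))" if "l \<le> p + q" for l
    using ws that unfolding weak_supmaj_def by simp
  show "real p * a1 \<le> real p * b1" using W[of p] by (simp add: sum_list_replicate)
  show "real p * a1 + real q * a2 \<le> real p * b1 + real q * b2"
    using W[of "p + q"] by (simp add: sum_list_replicate)
qed

lemma weak_supmaj_cong_mset: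
  assumes "mset a = mset a'" and "mset b = mset b'"
  shows "weak_supmaj a b \<longleftrightarrow> weak_supmaj a' b'"
proof -
  have "sort a = sort a'" "sort b = sort b'"
    using assms by (metis sorted_list_of_multiset_mset)+
  moreover have "length a = length a'" "length b = length b'"
    using assms by (auto intro: mset_eq_length)
  ultimately show ?thesis unfolding weak_supmaj_def by simp
qed

lemma gen_inv_sum_le_of_weak_supmaj:
  assumes F1: "ac_dist F1 f1" and F2: "ac_dist F2 f2"
    and gen: "arch_generator m psi" and lc: "log_convex_gen psi"
    and le: "\<forall>x>0. rev_hazard F2 f2 x \<le> rev_hazard F1 f1 x"
    and am: "antimono_on {0<..} (rev_hazard F1 f1) \<or> antimono_on {0<..} (rev_hazard F2 f2)"
    and "0 < n1" "0 < l1" "l1 \<le> l2" "m1 \<le> m2"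
    and ws: "weak_supmaj (replicate n1 l1 @ replicate n2 l2) (replicate n1 m1 @ replicate n2 m2)"
    and pos: "0 < F1 (l1 * x)" "0 < F2 (l2 * x)"
  shows "0 < F1 (m1 * x) \<and> 0 < F2 (m2 * x) \<and>
    real n1 * gen_inv psi (F1 (m1 * x)) + real n2 * gen_inv psi (F2 (m2 * x))
    \<le> real n1 * gen_inv psi (F1 (l1 * x)) + real n2 * gen_inv psi (F2 (l2 * x))"
proof (rule gen_inv_weighted_sum_le[OF F1 F2 gen lc le am _ _ \<open>0 < l1\<close> _ \<open>m1 \<le> m2\<close> _ _ pos])
  show "l1 \<le> m1"
    using weak_supmaj_two_blocks(1)[OF ws \<open>l1 \<le> l2\<close> \<open>m1 \<le> m2\<close>] \<open>0 < n1\<close> by simp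
  show "real n1 * l1 + real n2 * l2 \<le> real n1 * m1 + real n2 * m2"
    by (rule weak_supmaj_two_blocks(2)[OF ws \<open>l1 \<le> l2\<close> \<open>m1 \<le> m2\<close>])
  show "0 < x"
  proof (rule ccontr)
    assume "\<not> 0 < x"
    then have "l1 * x \<le> 0" using \<open>0 < l1\<close> by (simp add: mult_nonneg_nonpos)
    then show False using ac_dist_eq_0[OF F1] pos(1) by simp
  qed
qed simp_all

section \<open>Maxima of samples with an Archimedean copula\<close>

lemma max_stat_gt_iff:
  assumes "0 < n"
  shows "x < max_stat n Z \<omega> \<longleftrightarrow> \<not> (\<forall>i<n. Z i \<omega> \<le> x)"
  using assms unfolding max_stat_def by (subst Max_gr_iff) (auto simp: not_le)

lemma prob_max_stat_gt:
  assumes M: "prob_space M" and "0 < n" and rv: "\<And>i. i < n \<Longrightarrow> Z i \<in> borel_measurable M"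
  shows "measure M {\<omega> \<in> space M. x < max_stat n Z \<omega>}
    = 1 - measure M {\<omega> \<in> space M. \<forall>i<n. Z i \<omega> \<le> x}"
proof -
  define A where "A = {\<omega> \<in> space M. \<forall>i<n. Z i \<omega> \<le> x}"
  have "A = {\<omega> \<in> space M. \<forall>i\<in>{..<n}. Z i \<omega> \<le> x}" by (auto simp: A_def)
  also have "\<dots> \<in> sets M"
    using rv by (intro sets.sets_Collect_finite_All) (auto simp: borel_measurable_iff_le)
  finally have "A \<in> sets M" .
  have eq: "{\<omega> \<in> space M. x < max_stat n Z \<omega>} = space M - A"
    by (auto simp: A_def max_stat_gt_iff[OF \<open>0 < n\<close>])
  show ?thesis
    unfolding eq A_def[symmetric] by (rule prob_space.prob_compl[OF M \<open>A \<in> sets M\<close>])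
qed

lemma shares_arch_copula_two_blocks:
  assumes cop: "shares_arch_copula M psi (n1 + n2) Z" and "0 < n1" "0 < n2"
    and block1: "\<And>i. i < n1 \<Longrightarrow> measure M {\<omega> \<in> space M. Z i \<omega> \<le> x} = p1"
    and block2: "\<And>i. n1 \<le> i \<Longrightarrow> i < n1 + n2 \<Longrightarrow> measure M {\<omega> \<in> space M. Z i \<omega> \<le> x} = p2"
  shows "measure M {\<omega> \<in> space M. \<forall>i<n1 + n2. Z i \<omega> \<le> x}
    = (if p1 = 0 \<or> p2 = 0 then 0 else psi (real n1 * gen_inv psi p1 + real n2 * gen_inv psi p2))"
proof -
  define u where "u i = measure M {\<omega> \<in> space M. Z i \<omega> \<le> x}" for i
  have u: "u i = (if i < n1 then p1 else p2)" if "i < n1 + n2" for i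
    using block1 block2 that by (simp add: u_def)
  have "u 0 = p1" "u n1 = p2" using u assms(2,3) by simp_all
  have "(\<exists>i<n1 + n2. u i = 0) \<longleftrightarrow> p1 = 0 \<or> p2 = 0"
  proof
    assume "\<exists>i<n1 + n2. u i = 0"
    then show "p1 = 0 \<or> p2 = 0" using u by (auto split: if_splits)
  next
    assume "p1 = 0 \<or> p2 = 0"
    then show "\<exists>i<n1 + n2. u i = 0"
    proof
      assume "p1 = 0"
      then show ?thesis using \<open>u 0 = p1\<close> assms(2) by (intro exI[of _ 0]) simp
    next
      assume "p2 = 0"
      then show ?thesis using \<open>u n1 = p2\<close> assms(3) by (intro exI[of _ n1]) simp
    qed
  qed
  moreover have "(\<Sum>i<n1 + n2. gen_inv psi (u i))
      = (\<Sum>i\<in>{0..<n1}. gen_inv psi (u i)) + (\<Sum>i\<in>{n1..<n1 + n2}. gen_inv psi (u i))"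
    by (simp add: lessThan_atLeast0 sum.atLeastLessThan_concat)
  moreover have "\<dots> = (\<Sum>i\<in>{0..<n1}. gen_inv psi p1) + (\<Sum>i\<in>{n1..<n1 + n2}. gen_inv psi p2)"
    using u by (intro arg_cong2[where f = "(+)"] sum.cong) auto
  ultimately show ?thesis
    using cop unfolding shares_arch_copula_def arch_copula_def u_def by simp
qed

lemma st_le_max_stat_two_blocks:
  fixes M :: "'a measure" and N :: "'b measure"
    and X :: "nat \<Rightarrow> 'a \<Rightarrow> real" and Y :: "nat \<Rightarrow> 'b \<Rightarrow> real"
  assumes key: "\<And>x. 0 < F1 (l1 * x) \<Longrightarrow> 0 < F2 (l2 * x) \<Longrightarrow>
       0 < F1 (m1 * x) \<and> 0 < F2 (m2 * x) \<and>
       real n1 * gen_inv psi (F1 (m1 * x)) + real n2 * gen_inv psi (F2 (m2 * x))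
       \<le> real n1 * gen_inv psi (F1 (l1 * x)) + real n2 * gen_inv psi (F2 (l2 * x))"
    and "0 < n1" "0 < n2" and gen: "arch_generator m psi"
    and F1: "ac_dist F1 f1" and F2: "ac_dist F2 f2"
    and M: "prob_space M" and N: "prob_space N"
    and Xrv: "\<And>i. i < n1 + n2 \<Longrightarrow> X i \<in> borel_measurable M"
    and Yrv: "\<And>i. i < n1 + n2 \<Longrightarrow> Y i \<in> borel_measurable N"
    and Xcop: "shares_arch_copula M psi (n1 + n2) X"
    and Ycop: "shares_arch_copula N psi (n1 + n2) Y"
    and Xm1: "\<And>i x. i < n1 \<Longrightarrow> measure M {\<omega> \<in> space M. X i \<omega> \<le> x} = F1 (l1 * x)"
    and Xm2: "\<And>i x. n1 \<le> i \<Longrightarrow> i < n1 + n2 \<Longrightarrow>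
                 measure M {\<omega> \<in> space M. X i \<omega> \<le> x} = F2 (l2 * x)"
    and Ym1: "\<And>i x. i < n1 \<Longrightarrow> measure N {\<omega> \<in> space N. Y i \<omega> \<le> x} = F1 (m1 * x)"
    and Ym2: "\<And>i x. n1 \<le> i \<Longrightarrow> i < n1 + n2 \<Longrightarrow>
                 measure N {\<omega> \<in> space N. Y i \<omega> \<le> x} = F2 (m2 * x)"
  shows "st_le N (max_stat (n1 + n2) Y) M (max_stat (n1 + n2) X)"
  unfolding st_le_def
proof
  fix x :: real
  define sum_l sum_m
    where "sum_l = real n1 * gen_inv psi (F1 (l1 * x)) + real n2 * gen_inv psi (F2 (l2 * x))"
      and "sum_m = real n1 * gen_inv psi (F1 (m1 * x)) + real n2 * gen_inv psi (F2 (m2 * x))"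
  have PX: "measure M {\<omega> \<in> space M. \<forall>i<n1 + n2. X i \<omega> \<le> x}
      = (if F1 (l1 * x) = 0 \<or> F2 (l2 * x) = 0 then 0 else psi sum_l)"
    unfolding sum_l_def by (rule shares_arch_copula_two_blocks[OF Xcop assms(2,3) Xm1 Xm2])
  have PY: "measure N {\<omega> \<in> space N. \<forall>i<n1 + n2. Y i \<omega> \<le> x}
      = (if F1 (m1 * x) = 0 \<or> F2 (m2 * x) = 0 then 0 else psi sum_m)"
    unfolding sum_m_def by (rule shares_arch_copula_two_blocks[OF Ycop assms(2,3) Ym1 Ym2])
  have "measure M {\<omega> \<in> space M. \<forall>i<n1 + n2. X i \<omega> \<le> x}
      \<le> measure N {\<omega> \<in> space N. \<forall>i<n1 + n2. Y i \<omega> \<le> x}"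
  proof (cases "F1 (l1 * x) = 0 \<or> F2 (l2 * x) = 0")
    case False
    then have "0 < F1 (l1 * x)" "0 < F2 (l2 * x)"
      using ac_dist_nonneg[OF F1] ac_dist_nonneg[OF F2] by (simp_all add: order_less_le)
    note key = key[OF this, folded sum_l_def sum_m_def]
    have "0 \<le> sum_m"
      unfolding sum_m_def using key ac_dist_le_1[OF F1] ac_dist_le_1[OF F2]
      by (simp add: arch_generator_gen_inv(1)[OF gen])
    moreover have "antimono_on {0..} psi" using gen unfolding arch_generator_def by simp
    ultimately have "psi sum_l \<le> psi sum_m" using key by (auto intro: monotone_onD)
    then show ?thesis using PX PY False key by simp
  qed (use PX in simp)
  then show "measure N {\<omega> \<in> space N. x < max_stat (n1 + n2) Y \<omega>}
      \<le> measure M {\<omega> \<in> space M. x < max_stat (n1 + n2) X \<omega>}"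
    using prob_max_stat_gt[OF M _ Xrv] prob_max_stat_gt[OF N _ Yrv] assms(2) by simp
qed

theorem corollary3p1:
  fixes M :: "'a measure" and N :: "'b measure"
    and X :: "nat \<Rightarrow> 'a \<Rightarrow> real" and Y :: "nat \<Rightarrow> 'b \<Rightarrow> real"
    and psi F1 F2 f1 f2 :: "real \<Rightarrow> real"
    and n1 n2 :: nat and l1 l2 m1 m2 :: real
  assumes n1: "n1 \<ge> 1" and n2: "n2 \<ge> 1"
    and gen: "arch_generator (n1 + n2) psi" and logconv: "log_convex_gen psi"
    and F1: "ac_dist F1 f1" and F2: "ac_dist F2 f2"
    and pos: "l1 > 0" "l2 > 0" "m1 > 0" "m2 > 0"
    and M: "prob_space M" and N: "prob_space N"
    and Xrv: "\<And>i. i < n1 + n2 \<Longrightarrow> X i \<in> borel_measurable M"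
    and Yrv: "\<And>i. i < n1 + n2 \<Longrightarrow> Y i \<in> borel_measurable N"
    and Xnn: "\<And>i \<omega>. i < n1 + n2 \<Longrightarrow> \<omega> \<in> space M \<Longrightarrow> 0 \<le> X i \<omega>"
    and Ynn: "\<And>i \<omega>. i < n1 + n2 \<Longrightarrow> \<omega> \<in> space N \<Longrightarrow> 0 \<le> Y i \<omega>"
    and Xcop: "shares_arch_copula M psi (n1 + n2) X"
    and Ycop: "shares_arch_copula N psi (n1 + n2) Y"
    and Xm1: "\<And>i x. i < n1 \<Longrightarrow> measure M {\<omega> \<in> space M. X i \<omega> \<le> x} = F1 (l1 * x)"
    and Xm2: "\<And>i x. n1 \<le> i \<Longrightarrow> i < n1 + n2 \<Longrightarrow>
                 measure M {\<omega> \<in> space M. X i \<omega> \<le> x} = F2 (l2 * x)"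
    and Ym1: "\<And>i x. i < n1 \<Longrightarrow> measure N {\<omega> \<in> space N. Y i \<omega> \<le> x} = F1 (m1 * x)"
    and Ym2: "\<And>i x. n1 \<le> i \<Longrightarrow> i < n1 + n2 \<Longrightarrow>
                 measure N {\<omega> \<in> space N. Y i \<omega> \<le> x} = F2 (m2 * x)"
  shows
    "(n1 \<ge> n2 \<and> l1 \<le> l2 \<and> m1 \<le> m2 \<and>
        (antimono_on {0<..} (rev_hazard F1 f1) \<or> antimono_on {0<..} (rev_hazard F2 f2)) \<and>
        (\<forall>x>0. rev_hazard F1 f1 x \<ge> rev_hazard F2 f2 x) \<and>
        weak_supmaj (replicate n1 l1 @ replicate n2 l2) (replicate n1 m1 @ replicate n2 m2)
      \<longrightarrow> st_le N (max_stat (n1 + n2) Y) M (max_stat (n1 + n2) X))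
   \<and> (n1 \<le> n2 \<and> l1 \<ge> l2 \<and> m1 \<ge> m2 \<and>
        (antimono_on {0<..} (rev_hazard F1 f1) \<or> antimono_on {0<..} (rev_hazard F2 f2)) \<and>
        (\<forall>x>0. rev_hazard F1 f1 x \<le> rev_hazard F2 f2 x) \<and>
        weak_supmaj (replicate n1 l1 @ replicate n2 l2) (replicate n1 m1 @ replicate n2 m2)
      \<longrightarrow> st_le N (max_stat (n1 + n2) Y) M (max_stat (n1 + n2) X))
   \<and> (((n1 \<ge> n2 \<and> l1 \<le> l2 \<and> m1 \<le> m2) \<or> (n1 \<le> n2 \<and> l1 \<ge> l2 \<and> m1 \<ge> m2)) \<and>
        (\<forall>x>0. rev_hazard F1 f1 x = rev_hazard F2 f2 x) \<and>
        antimono_on {0<..} (rev_hazard F1 f1) \<and>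
        weak_supmaj (replicate n1 l1 @ replicate n2 l2) (replicate n1 m1 @ replicate n2 m2)
      \<longrightarrow> st_le N (max_stat (n1 + n2) Y) M (max_stat (n1 + n2) X))"
proof -
  have "0 < n1" "0 < n2" using n1 n2 by simp_all
  note reduce = st_le_max_stat_two_blocks[OF _ \<open>0 < n1\<close> \<open>0 < n2\<close> gen F1 F2 M N Xrv Yrv Xcop Ycop
      Xm1 Xm2 Ym1 Ym2]
  have case_a: "st_le N (max_stat (n1 + n2) Y) M (max_stat (n1 + n2) X)"
    if le: "\<forall>x>0. rev_hazard F2 f2 x \<le> rev_hazard F1 f1 x"
      and am: "antimono_on {0<..} (rev_hazard F1 f1) \<or> antimono_on {0<..} (rev_hazard F2 f2)"
      and scales: "l1 \<le> l2" "m1 \<le> m2"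
      and ws: "weak_supmaj (replicate n1 l1 @ replicate n2 l2) (replicate n1 m1 @ replicate n2 m2)"
    by (rule reduce[OF gen_inv_sum_le_of_weak_supmaj[OF F1 F2 gen logconv le am \<open>0 < n1\<close> pos(1)
          scales ws]])
  have case_b: "st_le N (max_stat (n1 + n2) Y) M (max_stat (n1 + n2) X)"
    if le: "\<forall>x>0. rev_hazard F1 f1 x \<le> rev_hazard F2 f2 x"
      and am: "antimono_on {0<..} (rev_hazard F1 f1) \<or> antimono_on {0<..} (rev_hazard F2 f2)"
      and scales: "l2 \<le> l1" "m2 \<le> m1"
      and ws: "weak_supmaj (replicate n1 l1 @ replicate n2 l2) (replicate n1 m1 @ replicate n2 m2)"
  proof -
    have am': "antimono_on {0<..} (rev_hazard F2 f2) \<or> antimono_on {0<..} (rev_hazard F1 f1)"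
      using am by blast
    have ws': "weak_supmaj (replicate n2 l2 @ replicate n1 l1) (replicate n2 m2 @ replicate n1 m1)"
      using ws by (subst weak_supmaj_cong_mset) (auto simp: add.commute)
    note swapped = gen_inv_sum_le_of_weak_supmaj[OF F2 F1 gen logconv le am' \<open>0 < n2\<close> pos(2)
        scales ws']
    show ?thesis by (rule reduce) (use swapped in \<open>auto simp: add.commute\<close>)
  qed
  show ?thesis using case_a case_b by auto
qed

end
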